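(* Let $(\mathbf{x}_i,y_i)_{i=1}^n\subset\mathbb{R}^d\times\{\pm1\}$ satisfy $\|\mathbf{x}_i\|\le 1$ for all $i$, and suppose there are $\gamma>0$ and a unit vector $\mathbf{w}_*$ with $y_i\mathbf{x}_i^\top\mathbf{w}_*\ge\gamma$ for all $i$. Let $L(\mathbf{w})=\frac1n\sum_{i=1}^n\ln\big(1+\exp(-y_i\mathbf{x}_i^\top\mathbf{w})\big)$ and run gradient descent $\mathbf{w}_t=\mathbf{w}_{t-1}-\eta\nabla L(\mathbf{w}_{t-1})$ from $\mathbf{w}_0=0$. Let $T$ be an integer with $T\ge 120\max\{e,n\}/\gamma^2$ and set $\eta:=\gamma^2T/120$. Then $\tau:=\frac{60}{\gamma^2}\max\big\{\eta,n,e,\frac{\eta+n}{\eta}\ln\frac{\eta+n}{\eta}\big\}\le T/2$, and \[L(\mathbf{w}_T)\le 480\,\frac{\ln^2(\gamma^4T^2)}{\gamma^4T^2}.\] *)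

theory Defs
  imports "HOL-Analysis.Analysis"
begin

definition logloss :: "nat \<Rightarrow> (nat \<Rightarrow> 'a::euclidean_space) \<Rightarrow> (nat \<Rightarrow> real) \<Rightarrow> 'a \<Rightarrow> real" where
  "logloss n x y w = (1 / real n) * (\<Sum>i<n. ln (1 + exp (- (y i * (x i \<bullet> w)))))"

definition grad :: "('a::euclidean_space \<Rightarrow> real) \<Rightarrow> 'a \<Rightarrow> 'a" where
  "grad f w = (THE g. (f has_derivative (\<lambda>h. g \<bullet> h)) (at w))"

fun gd :: "real \<Rightarrow> ('a::euclidean_space \<Rightarrow> real) \<Rightarrow> nat \<Rightarrow> 'a" where
  "gd eta f 0 = 0"
| "gd eta f (Suc t) = gd eta f t - eta *\<^sub>R grad f (gd eta f t)"

end

theory Submission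
  imports Defs
begin

text \<open>Write \<open>\<ell>(s) = ln (1 + exp (-s))\<close> and \<open>g(s) = -\<ell>'(s) = 1 / (1 + exp s)\<close> (below
  \<open>logistic_loss\<close> and \<open>logistic_weight\<close>), and let \<open>G(w)\<close> (\<open>mean_weight\<close>) be the mean of
  \<open>g(y\<^sub>i x\<^sub>i \<bullet> w)\<close>, so that \<open>\<gamma> G(w) \<le> \<parallel>\<nabla>L(w)\<parallel> \<le> G(w)\<close>.
  In the first \<open>T/2\<close> steps the step size is far too large for classical descent, but two
  facts survive: each step moves the iterate by \<open>\<eta>\<gamma>G\<close> along \<open>w\<^sub>*\<close> (the perceptron argument), while
  comparing with a suitable multiple of \<open>w\<^sub>*\<close> keeps \<open>\<parallel>w\<^sub>t\<parallel> = O(\<eta>/\<gamma>)\<close>. Hence \<open>G\<close> must drop below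
  \<open>1/(6\<eta>)\<close> at some step \<open>k < T/2\<close>, where \<open>L \<le> 2G \<le> 1/(3\<eta>)\<close>. From there on the curvature of \<open>L\<close>,
  which is bounded by \<open>G \<le> L\<close> itself, is small compared with \<open>1/\<eta>\<close>: every step decreases \<open>L\<close> by
  \<open>\<eta>\<parallel>\<nabla>L\<parallel>\<^sup>2/2 \<ge> (2/9)\<eta>\<gamma>\<^sup>2L\<^sup>2\<close>, so \<open>1/L\<close> grows linearly and \<open>L(w\<^sub>T) \<le> 9/(\<eta>\<gamma>\<^sup>2T) = 1080/(\<gamma>\<^sup>2T)\<^sup>2\<close>.\<close>

definition logistic_loss :: "real \<Rightarrow> real" where
  "logistic_loss s = ln (1 + exp (- s))"

definition logistic_weight :: "real \<Rightarrow> real" where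
  "logistic_weight s = 1 / (1 + exp s)"

lemma one_plus_exp_pos [simp]: "0 < 1 + exp (t::real)"
  by (simp add: add_pos_pos)

lemma one_plus_exp_neq_zero [simp]: "1 + exp (t::real) \<noteq> 0"
  using one_plus_exp_pos[of t] by linarith

lemma logistic_weight_eq: "logistic_weight s = exp (- s) / (1 + exp (- s))"
  unfolding logistic_weight_def by (simp add: exp_minus field_simps)

lemma logistic_weight_pos: "0 < logistic_weight s"
  by (simp add: logistic_weight_def)

lemma logistic_weight_le_one: "logistic_weight s \<le> 1"
  by (simp add: logistic_weight_def)

lemma logistic_loss_pos: "0 < logistic_loss s"
  unfolding logistic_loss_def by (rule ln_gt_zero) simp

lemma logistic_loss_le_exp: "logistic_loss s \<le> exp (- s)"
  unfolding logistic_loss_def by (rule ln_add_one_self_le_self) simp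

lemma logistic_loss_antimono: "a \<le> b \<Longrightarrow> logistic_loss b \<le> logistic_loss a"
  unfolding logistic_loss_def by simp

lemma has_derivative_logistic_loss [derivative_intros]:
  assumes "(f has_derivative f') (at w within S)"
  shows "((\<lambda>v. logistic_loss (f v)) has_derivative (\<lambda>h. - logistic_weight (f w) * f' h))
           (at w within S)"
  unfolding logistic_loss_def
  by (rule derivative_eq_intros assms refl | simp)+
     (simp add: fun_eq_iff logistic_weight_eq divide_inverse mult_ac)

lemma logistic_weight_le_loss: "logistic_weight s \<le> logistic_loss s"
proof -
  define u where "u = exp (- s)"
  have u: "0 < u" by (simp add: u_def)
  have "ln (1 / (1 + u)) \<le> 1 / (1 + u) - 1"
    by (rule ln_le_minus_one) (use u in simp)
  then have "u / (1 + u) \<le> ln (1 + u)"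
    using u by (simp add: ln_div field_simps)
  then show ?thesis by (simp add: logistic_weight_eq logistic_loss_def u_def)
qed

lemma logistic_loss_diff:
  "logistic_loss b - logistic_loss a
     = ln ((1 - logistic_weight a) + logistic_weight a * exp (a - b))"
proof -
  have "(1 + exp (- b)) / (1 + exp (- a))
          = (1 - logistic_weight a) + logistic_weight a * exp (a - b)"
    unfolding logistic_weight_def
    by (simp add: exp_minus exp_diff divide_simps) (simp add: algebra_simps)
  then show ?thesis
    unfolding logistic_loss_def using ln_div[of "1 + exp (- b)" "1 + exp (- a)"] by simp
qed

lemma logistic_loss_tangent_le:
  "logistic_loss a - logistic_weight a * (b - a) \<le> logistic_loss b"
proof -
  let ?p = "logistic_weight a"
  have p: "0 < ?p" "?p \<le> 1"
    by (rule logistic_weight_pos logistic_weight_le_one)+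
  \<comment> \<open>Jensen for \<open>exp\<close>, with weights \<open>1 - ?p\<close> and \<open>?p\<close>\<close>
  have "exp ((1 - ?p) *\<^sub>R 0 + ?p *\<^sub>R (a - b)) \<le> (1 - ?p) * exp 0 + ?p * exp (a - b)"
    by (rule convex_onD[OF exp_convex]) (use p in auto)
  then have "?p * (a - b) \<le> ln ((1 - ?p) + ?p * exp (a - b))"
    by (subst ln_ge_iff) (use p in \<open>auto intro: add_nonneg_pos\<close>)
  then show ?thesis
    using logistic_loss_diff[of b a] by (simp add: algebra_simps)
qed

lemma exp_neg_le_quadratic:
  fixes s :: real
  assumes "0 \<le> s"
  shows "exp (- s) \<le> 1 - s + s^2"
proof -
  have "exp (- s) \<le> 1 / (1 + s)"
    using exp_ge_add_one_self[of s] assms by (simp add: exp_minus divide_simps)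
  also have "\<dots> \<le> 1 - s + s^2"
    using assms by (simp add: divide_simps power2_eq_square) (simp add: algebra_simps)
  finally show ?thesis .
qed

lemma exp_le_quadratic:
  fixes c :: real
  assumes "\<bar>c\<bar> \<le> 1"
  shows "exp c \<le> 1 + c + c^2"
proof (cases "0 \<le> c")
  case True
  then show ?thesis using exp_bound[of c] assms by simp
next
  case False
  then show ?thesis using exp_neg_le_quadratic[of "- c"] by simp
qed

text \<open>Self-bounded smoothness: the curvature term is controlled by the weight
  \<open>logistic_weight a\<close> itself rather than by a global constant.\<close>

lemma logistic_loss_add_le:
  assumes "\<bar>b\<bar> \<le> 1"
  shows "logistic_loss (a + b)
           \<le> logistic_loss a - logistic_weight a * b + logistic_weight a * b^2"
proof -
  let ?p = "logistic_weight a"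
  have p: "0 < ?p" "?p \<le> 1"
    by (rule logistic_weight_pos logistic_weight_le_one)+
  have "logistic_loss (a + b) - logistic_loss a \<le> (1 - ?p) + ?p * exp (- b) - 1"
    using logistic_loss_diff[of "a + b" a] ln_le_minus_one[of "(1 - ?p) + ?p * exp (- b)"] p
    by (simp add: add_nonneg_pos)
  also have "\<dots> = ?p * (exp (- b) - 1)"
    by (simp add: algebra_simps)
  also have "\<dots> \<le> ?p * (- b + b^2)"
    using exp_le_quadratic[of "- b"] assms p by (intro mult_left_mono) auto
  finally show ?thesis by (simp add: algebra_simps)
qed

lemma logistic_loss_le_twice_weight:
  assumes "logistic_weight a \<le> 1/2"
  shows "logistic_loss a \<le> 2 * logistic_weight a"
proof -
  have "exp (- a) \<le> 1"
    using assms by (simp add: logistic_weight_def divide_simps)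
  then have "exp (- a) \<le> 2 * logistic_weight a"
    by (simp add: logistic_weight_eq divide_simps)
  then show ?thesis using logistic_loss_le_exp[of a] by linarith
qed

lemma logistic_loss_sub_square_le_weight:
  "logistic_loss a - (logistic_loss a)^2 \<le> logistic_weight a"
proof -
  have e: "exp (logistic_loss a) = 1 + exp (- a)"
    by (simp add: logistic_loss_def)
  have "logistic_weight a = 1 - exp (- logistic_loss a)"
    unfolding logistic_weight_def exp_minus e by (simp add: field_simps)
  then show ?thesis
    using exp_neg_le_quadratic[of "logistic_loss a"] logistic_loss_pos[of a] by simp
qed

lemma grad_eqI:
  fixes f :: "'a::euclidean_space \<Rightarrow> real"
  assumes "(f has_derivative (\<lambda>h. g \<bullet> h)) (at w)"
  shows "grad f w = g"
  unfolding grad_def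
proof (rule the_equality)
  show "(f has_derivative (\<lambda>h. g \<bullet> h)) (at w)" by (rule assms)
  fix g' assume "(f has_derivative (\<lambda>h. g' \<bullet> h)) (at w)"
  then have "(\<lambda>h. g' \<bullet> h) = (\<lambda>h. g \<bullet> h)"
    using assms by (rule has_derivative_unique)
  then have "(g' - g) \<bullet> (g' - g) = 0"
    by (metis inner_diff_left right_minus_eq)
  then show "g' = g" by simp
qed

locale logistic_data =
  fixes n :: nat and z :: "nat \<Rightarrow> 'a::euclidean_space"
  assumes n_pos: "0 < n"
    and norm_z_le: "\<And>i. i < n \<Longrightarrow> norm (z i) \<le> 1"
begin

definition risk :: "'a \<Rightarrow> real" where
  "risk w = (1 / real n) * (\<Sum>i<n. logistic_loss (z i \<bullet> w))"

definition mean_weight :: "'a \<Rightarrow> real" where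
  "mean_weight w = (1 / real n) * (\<Sum>i<n. logistic_weight (z i \<bullet> w))"

lemma abs_inner_z_le: "i < n \<Longrightarrow> \<bar>z i \<bullet> v\<bar> \<le> norm v"
  using Cauchy_Schwarz_ineq2[of "z i" v] norm_z_le[of i]
    mult_right_le_one_le[of "norm v" "norm (z i)"]
  by (simp add: mult.commute)

lemma grad_risk:
  "grad risk w = - ((1 / real n) *\<^sub>R (\<Sum>i<n. logistic_weight (z i \<bullet> w) *\<^sub>R z i))"
proof (rule grad_eqI)
  have "(risk has_derivative
          (\<lambda>h. (1 / real n) * (\<Sum>i<n. - logistic_weight (z i \<bullet> w) * (z i \<bullet> h)))) (at w)"
    unfolding risk_def[abs_def] by (rule derivative_eq_intros refl)+
  then show "(risk has_derivative
      (\<lambda>h. - ((1 / real n) *\<^sub>R (\<Sum>i<n. logistic_weight (z i \<bullet> w) *\<^sub>R z i)) \<bullet> h)) (at w)"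
    by (simp add: inner_sum_left sum_negf)
qed

lemma risk_pos: "0 < risk w"
  unfolding risk_def using n_pos
  by (intro mult_pos_pos sum_pos) (auto simp: logistic_loss_pos)

lemma mean_weight_pos: "0 < mean_weight w"
  unfolding mean_weight_def using n_pos
  by (intro mult_pos_pos sum_pos) (auto simp: logistic_weight_pos)

lemma mean_weight_le_one: "mean_weight w \<le> 1"
proof -
  have "(\<Sum>i<n. logistic_weight (z i \<bullet> w)) \<le> (\<Sum>i<n. 1)"
    by (rule sum_mono) (rule logistic_weight_le_one)
  then show ?thesis
    unfolding mean_weight_def using n_pos by (simp add: divide_simps)
qed

lemma mean_weight_le_risk: "mean_weight w \<le> risk w"
  unfolding mean_weight_def risk_def using n_pos
  by (simp add: divide_right_mono sum_mono logistic_weight_le_loss)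

lemma norm_grad_risk_le: "norm (grad risk w) \<le> mean_weight w"
proof -
  have "norm (\<Sum>i<n. logistic_weight (z i \<bullet> w) *\<^sub>R z i) \<le> (\<Sum>i<n. logistic_weight (z i \<bullet> w))"
  proof (rule order_trans[OF norm_sum sum_mono])
    fix i assume "i \<in> {..<n}"
    then show "norm (logistic_weight (z i \<bullet> w) *\<^sub>R z i) \<le> logistic_weight (z i \<bullet> w)"
      using norm_z_le[of i] logistic_weight_pos[of "z i \<bullet> w"] by (simp add: mult_left_le)
  qed
  then show ?thesis
    unfolding grad_risk mean_weight_def using n_pos by (simp add: divide_simps)
qed

lemma grad_risk_inner_le: "grad risk w \<bullet> (u - w) \<le> risk u - risk w"
proof -
  have "(\<Sum>i<n. logistic_weight (z i \<bullet> w) * (z i \<bullet> w) - logistic_weight (z i \<bullet> w) * (z i \<bullet> u))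
          \<le> (\<Sum>i<n. logistic_loss (z i \<bullet> u) - logistic_loss (z i \<bullet> w))"
    using logistic_loss_tangent_le by (intro sum_mono) (simp add: algebra_simps)
  then show ?thesis
    unfolding grad_risk risk_def using n_pos
    by (simp add: inner_sum_left inner_diff_right sum_subtractf right_diff_distrib
        divide_right_mono diff_divide_distrib[symmetric])
qed

lemma risk_le_twice_mean_weight:
  assumes "real n * mean_weight w \<le> 1/2"
  shows "risk w \<le> 2 * mean_weight w"
proof -
  have "logistic_loss (z i \<bullet> w) \<le> 2 * logistic_weight (z i \<bullet> w)" if "i < n" for i
  proof (rule logistic_loss_le_twice_weight)
    have "logistic_weight (z i \<bullet> w) \<le> (\<Sum>j<n. logistic_weight (z j \<bullet> w))"
      using that by (intro member_le_sum) (auto intro: less_imp_le logistic_weight_pos)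
    also have "\<dots> = real n * mean_weight w"
      unfolding mean_weight_def using n_pos by simp
    finally show "logistic_weight (z i \<bullet> w) \<le> 1/2" using assms by simp
  qed
  then have "(\<Sum>i<n. logistic_loss (z i \<bullet> w)) \<le> 2 * (\<Sum>i<n. logistic_weight (z i \<bullet> w))"
    by (auto simp: sum_distrib_left intro!: sum_mono)
  then show ?thesis
    unfolding risk_def mean_weight_def using n_pos by (simp add: divide_right_mono)
qed

lemma risk_sub_square_le_mean_weight: "risk w - real n * (risk w)^2 \<le> mean_weight w"
proof -
  define S where "S = (\<Sum>i<n. logistic_loss (z i \<bullet> w))"
  have "(\<Sum>i<n. (logistic_loss (z i \<bullet> w))^2) \<le> (\<Sum>i<n. logistic_loss (z i \<bullet> w) * S)"
  proof (rule sum_mono)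
    fix i assume "i \<in> {..<n}"
    then have "logistic_loss (z i \<bullet> w) \<le> S"
      unfolding S_def by (intro member_le_sum) (auto intro: less_imp_le logistic_loss_pos)
    then show "(logistic_loss (z i \<bullet> w))^2 \<le> logistic_loss (z i \<bullet> w) * S"
      using logistic_loss_pos[of "z i \<bullet> w"] by (simp add: power2_eq_square)
  qed
  also have "\<dots> = S^2"
    unfolding S_def by (simp add: sum_distrib_right power2_eq_square)
  finally have "S - S^2 \<le> (\<Sum>i<n. logistic_loss (z i \<bullet> w) - (logistic_loss (z i \<bullet> w))^2)"
    unfolding S_def by (simp add: sum_subtractf)
  also have "\<dots> \<le> (\<Sum>i<n. logistic_weight (z i \<bullet> w))"
    by (intro sum_mono logistic_loss_sub_square_le_weight)
  finally have "real n * (risk w - real n * (risk w)^2) \<le> real n * mean_weight w"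
    unfolding risk_def mean_weight_def S_def[symmetric] using n_pos
    by (simp add: power2_eq_square algebra_simps)
  then show ?thesis using n_pos by simp
qed

lemma risk_add_le:
  assumes "norm v \<le> 1"
  shows "risk (w + v) \<le> risk w + grad risk w \<bullet> v + mean_weight w * (norm v)^2"
proof -
  have "logistic_loss (z i \<bullet> (w + v))
          \<le> logistic_loss (z i \<bullet> w) - logistic_weight (z i \<bullet> w) * (z i \<bullet> v)
             + logistic_weight (z i \<bullet> w) * (norm v)^2" if "i < n" for i
  proof -
    have zv: "\<bar>z i \<bullet> v\<bar> \<le> norm v" using that by (rule abs_inner_z_le)
    then have "(z i \<bullet> v)^2 \<le> (norm v)^2"
      by (metis abs_ge_zero power2_abs power_mono)
    then have "logistic_weight (z i \<bullet> w) * (z i \<bullet> v)^2 \<le> logistic_weight (z i \<bullet> w) * (norm v)^2"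
      by (intro mult_left_mono) (auto intro: less_imp_le logistic_weight_pos)
    then show ?thesis
      using logistic_loss_add_le[of "z i \<bullet> v" "z i \<bullet> w"] zv assms by (simp add: inner_add_right)
  qed
  then have "(\<Sum>i<n. logistic_loss (z i \<bullet> (w + v)))
      \<le> (\<Sum>i<n. logistic_loss (z i \<bullet> w) - logistic_weight (z i \<bullet> w) * (z i \<bullet> v)
              + logistic_weight (z i \<bullet> w) * (norm v)^2)"
    by (intro sum_mono) simp
  also have "\<dots> = (\<Sum>i<n. logistic_loss (z i \<bullet> w))
      - (\<Sum>i<n. logistic_weight (z i \<bullet> w) * (z i \<bullet> v))
      + (\<Sum>i<n. logistic_weight (z i \<bullet> w)) * (norm v)^2"
    by (simp add: sum.distrib sum_subtractf sum_distrib_right)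
  finally show ?thesis
    unfolding risk_def mean_weight_def grad_risk using n_pos
    by (simp add: inner_sum_left field_simps)
qed

lemma risk_descent:
  assumes "0 \<le> eta" and "eta * mean_weight w \<le> 1/2"
  shows "risk (w - eta *\<^sub>R grad risk w) \<le> risk w - eta / 2 * (norm (grad risk w))^2"
proof -
  let ?g = "grad risk w"
  have "eta * norm ?g \<le> eta * mean_weight w"
    by (intro mult_left_mono norm_grad_risk_le assms(1))
  then have step: "norm (- (eta *\<^sub>R ?g)) \<le> 1/2"
    using assms by simp
  have "risk (w - eta *\<^sub>R ?g) \<le> risk w - eta * (norm ?g)^2 + mean_weight w * (eta * norm ?g)^2"
    using risk_add_le[of "- (eta *\<^sub>R ?g)" w] step assms(1)
    by (simp add: power2_norm_eq_inner power_mult_distrib)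
  also have "mean_weight w * (eta * norm ?g)^2 = (eta * mean_weight w) * (eta * (norm ?g)^2)"
    by (simp add: power2_eq_square)
  also have "\<dots> \<le> 1/2 * (eta * (norm ?g)^2)"
    using assms by (intro mult_right_mono) auto
  finally show ?thesis by simp
qed

end

lemma exp_neg_six_le: "exp (- 6) \<le> (1::real) / 120"
proof -
  have "(5::real)^3 \<le> (exp 2)^3"
    using exp_lower_Taylor_quadratic[of "2::real"] by (intro power_mono) auto
  also have "(exp (2::real))^3 = exp 6"
    by (simp add: exp_of_nat_mult[symmetric])
  finally show ?thesis by (simp add: exp_minus divide_simps)
qed

lemma inverse_increment_le:
  fixes a b c :: real
  assumes "0 < a" "0 < b" "0 \<le> c" "b \<le> a - c * a^2"
  shows "1 / a + c \<le> 1 / b"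
proof -
  have "b * (1 + c * a) \<le> (a - c * a^2) * (1 + c * a)"
    using assms by (intro mult_right_mono) auto
  also have "\<dots> = a - c^2 * a^3"
    by (simp add: power2_eq_square power3_eq_cube algebra_simps)
  also have "\<dots> \<le> a"
    using assms by simp
  finally show ?thesis
    using assms by (simp add: field_simps)
qed

locale separable_logistic_data = logistic_data +
  fixes \<gamma> :: real and wstar :: 'a
  assumes gamma_pos: "0 < \<gamma>"
    and norm_wstar: "norm wstar = 1"
    and margin: "\<And>i. i < n \<Longrightarrow> \<gamma> \<le> z i \<bullet> wstar"
begin

lemma gamma_le_one: "\<gamma> \<le> 1"
  using margin[of 0] abs_inner_z_le[of 0 wstar] n_pos norm_wstar by simp

lemma grad_risk_inner_wstar_le: "grad risk w \<bullet> wstar \<le> - \<gamma> * mean_weight w"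
proof -
  have "(\<Sum>i<n. logistic_weight (z i \<bullet> w)) * \<gamma>
          \<le> (\<Sum>i<n. logistic_weight (z i \<bullet> w) * (z i \<bullet> wstar))"
    unfolding sum_distrib_right
    using margin by (intro sum_mono mult_left_mono) (auto intro: less_imp_le logistic_weight_pos)
  then show ?thesis
    unfolding grad_risk mean_weight_def using n_pos
    by (simp add: inner_sum_left divide_right_mono mult.commute)
qed

lemma norm_grad_risk_ge: "\<gamma> * mean_weight w \<le> norm (grad risk w)"
  using grad_risk_inner_wstar_le[of w] Cauchy_Schwarz_ineq2[of "grad risk w" wstar] norm_wstar
  by simp

lemma risk_scaleR_wstar_le:
  assumes "0 \<le> R"
  shows "risk (R *\<^sub>R wstar) \<le> exp (- (\<gamma> * R))"
proof -
  have "logistic_loss (z i \<bullet> (R *\<^sub>R wstar)) \<le> exp (- (\<gamma> * R))" if "i < n" for i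
  proof -
    have "\<gamma> * R \<le> z i \<bullet> (R *\<^sub>R wstar)"
      using mult_right_mono[OF margin[OF that] assms] by (simp add: mult.commute)
    then show ?thesis
      using logistic_loss_antimono logistic_loss_le_exp order_trans by blast
  qed
  then have "(\<Sum>i<n. logistic_loss (z i \<bullet> (R *\<^sub>R wstar))) \<le> real n * exp (- (\<gamma> * R))"
    using sum_mono[of "{..<n}" _ "\<lambda>_. exp (- (\<gamma> * R))"] by simp
  then show ?thesis
    unfolding risk_def using n_pos by (simp add: field_simps)
qed

lemma gd_inner_wstar_ge:
  assumes "0 \<le> eta"
  shows "eta * \<gamma> * (\<Sum>k<t. mean_weight (gd eta risk k)) \<le> gd eta risk t \<bullet> wstar"
proof (induction t)
  case 0
  then show ?case by simp
next
  case (Suc t)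
  have "eta * (\<gamma> * mean_weight (gd eta risk t)) \<le> eta * (- (grad risk (gd eta risk t) \<bullet> wstar))"
    using grad_risk_inner_wstar_le[of "gd eta risk t"] assms by (intro mult_left_mono) auto
  then show ?case
    using Suc.IH by (simp add: inner_diff_left algebra_simps)
qed

text \<open>The comparator is shifted by \<open>eta / (2 * \<gamma>)\<close> along \<open>wstar\<close> so that, by the margin,
  the inner product with the gradient absorbs the second-order term \<open>eta^2 * norm (grad risk w)^2\<close>
  however large \<open>eta\<close> is.\<close>

lemma gd_dist_sq_le:
  assumes "0 \<le> eta" "0 \<le> R"
  defines "u \<equiv> (R + eta / (2 * \<gamma>)) *\<^sub>R wstar"
  shows "(norm (gd eta risk t - u))^2 \<le> (norm u)^2 + 2 * eta * real t * exp (- (\<gamma> * R))"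
proof (induction t)
  case 0
  then show ?case by simp
next
  case (Suc t)
  define v where "v = gd eta risk t"
  define g where "g = grad risk v"
  have "(norm (gd eta risk (Suc t) - u))^2 = (norm ((v - u) - eta *\<^sub>R g))^2"
    by (simp add: v_def g_def algebra_simps)
  also have "\<dots> = (norm (v - u))^2 + 2 * eta * (g \<bullet> (R *\<^sub>R wstar - v))
                   + eta^2 / \<gamma> * (g \<bullet> wstar) + eta^2 * (norm g)^2"
    using gamma_pos unfolding u_def power2_norm_eq_inner
    by (simp add: inner_diff_left inner_diff_right inner_commute power2_eq_square algebra_simps)
  also have "2 * eta * (g \<bullet> (R *\<^sub>R wstar - v)) \<le> 2 * eta * exp (- (\<gamma> * R))"
    using grad_risk_inner_le[of v "R *\<^sub>R wstar"] risk_pos[of v] risk_scaleR_wstar_le[OF assms(2)]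
      assms(1) unfolding g_def by (intro mult_left_mono) auto
  also have "eta^2 / \<gamma> * (g \<bullet> wstar) \<le> - (eta^2 * mean_weight v)"
    using mult_left_mono[OF grad_risk_inner_wstar_le[of v], of "eta^2 / \<gamma>"] gamma_pos
    unfolding g_def by simp
  also have "eta^2 * (norm g)^2 \<le> eta^2 * mean_weight v"
  proof (intro mult_left_mono)
    have "(norm g)^2 \<le> (mean_weight v)^2"
      unfolding g_def by (intro power_mono norm_grad_risk_le) simp
    also have "\<dots> \<le> mean_weight v"
      using mean_weight_pos[of v] mean_weight_le_one[of v] by (simp add: power2_eq_square)
    finally show "(norm g)^2 \<le> mean_weight v" .
  qed simp
  finally show ?case
    using Suc.IH unfolding v_def by (simp add: algebra_simps)
qed

lemma norm_gd_le:
  assumes "0 \<le> eta" "\<gamma>^2 * real t \<le> 60 * eta"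
  shows "norm (gd eta risk t) \<le> (12 + 2 * eta) / \<gamma>"
proof -
  define c where "c = 6 / \<gamma> + eta / (2 * \<gamma>)"
  define u where "u = c *\<^sub>R wstar"
  have c: "0 \<le> c" "norm u = c"
    using gamma_pos assms(1) norm_wstar by (auto simp: c_def u_def)
  have "2 * eta * real t * exp (- 6) \<le> 2 * eta * real t * (1 / 120)"
    using assms(1) exp_neg_six_le by (intro mult_left_mono) auto
  also have "\<dots> = eta * (\<gamma>^2 * real t) / (60 * \<gamma>^2)"
    using gamma_pos by (simp add: field_simps)
  also have "\<dots> \<le> eta * (60 * eta) / (60 * \<gamma>^2)"
    using mult_left_mono[OF assms(2) assms(1)] by (rule divide_right_mono) simp
  also have "\<dots> = (eta / \<gamma>)^2"
    using gamma_pos by (simp add: power2_eq_square)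
  finally have tail: "2 * eta * real t * exp (- 6) \<le> (eta / \<gamma>)^2" .
  have "exp (- (\<gamma> * (6 / \<gamma>))) = exp (- 6)"
    using gamma_pos by simp
  then have "(norm (gd eta risk t - u))^2 \<le> c^2 + 2 * eta * real t * exp (- 6)"
    using gd_dist_sq_le[of eta "6 / \<gamma>" t] assms(1) gamma_pos
    unfolding u_def c_def by (simp add: norm_wstar)
  also have "\<dots> \<le> c^2 + (eta / \<gamma>)^2"
    using tail by simp
  also have "\<dots> \<le> (c + eta / \<gamma>)^2"
    using c assms(1) gamma_pos by (simp add: power2_sum)
  finally have "(norm (gd eta risk t - u))^2 \<le> (c + eta / \<gamma>)^2" .
  then have "norm (gd eta risk t - u) \<le> c + eta / \<gamma>"
    by (rule power2_le_imp_le) (use c assms(1) gamma_pos in simp)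
  then have "norm (gd eta risk t) \<le> 2 * c + eta / \<gamma>"
    using norm_triangle_sub[of "gd eta risk t" u] c by linarith
  also have "2 * c + eta / \<gamma> = (12 + 2 * eta) / \<gamma>"
    using gamma_pos by (simp add: c_def field_simps)
  finally show ?thesis .
qed

lemma exists_small_mean_weight:
  assumes "exp 1 \<le> eta" "60 * eta - 1/2 \<le> \<gamma>^2 * real t" "\<gamma>^2 * real t \<le> 60 * eta"
  shows "\<exists>k<t. mean_weight (gd eta risk k) \<le> 1 / (6 * eta)"
proof (rule ccontr)
  assume "\<not> ?thesis"
  then have large: "1 / (6 * eta) \<le> mean_weight (gd eta risk k)" if "k < t" for k
    using that by force
  have e: "2.5 \<le> eta"
    using exp_lower_Taylor_quadratic[of "1::real"] assms(1) by simp
  have "\<gamma> * real t / 6 = eta * \<gamma> * (\<Sum>k<t. 1 / (6 * eta))"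
    using e by simp
  also have "\<dots> \<le> eta * \<gamma> * (\<Sum>k<t. mean_weight (gd eta risk k))"
    using large e gamma_pos by (intro mult_left_mono sum_mono) auto
  also have "\<dots> \<le> gd eta risk t \<bullet> wstar"
    using e by (intro gd_inner_wstar_ge) simp
  also have "\<dots> \<le> norm (gd eta risk t)"
    using Cauchy_Schwarz_ineq2[of "gd eta risk t" wstar] norm_wstar by simp
  also have "\<dots> \<le> (12 + 2 * eta) / \<gamma>"
    using e assms(3) by (intro norm_gd_le) auto
  finally have "\<gamma> * real t / 6 * \<gamma> \<le> 12 + 2 * eta"
    using gamma_pos by (simp add: le_divide_eq)
  then have "\<gamma>^2 * real t \<le> 72 + 12 * eta"
    by (simp add: power2_eq_square algebra_simps)
  then show False
    using assms(2) e by linarith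
qed

lemma exists_stable_iterate:
  assumes "exp 1 \<le> eta" "real n \<le> eta"
    and "60 * eta - 1/2 \<le> \<gamma>^2 * real t" "\<gamma>^2 * real t \<le> 60 * eta"
  shows "\<exists>k<t. eta * risk (gd eta risk k) \<le> 1/3"
proof -
  obtain k where k: "k < t" and small: "mean_weight (gd eta risk k) \<le> 1 / (6 * eta)"
    using exists_small_mean_weight assms(1,3,4) by blast
  have eta: "0 < eta"
    using assms(2) n_pos by linarith
  have "real n * mean_weight (gd eta risk k) \<le> eta * (1 / (6 * eta))"
    using small assms(2) mean_weight_pos by (intro mult_mono) (auto intro: less_imp_le)
  then have "risk (gd eta risk k) \<le> 2 * (1 / (6 * eta))"
    using eta small risk_le_twice_mean_weight[of "gd eta risk k"] by simp
  then have "eta * risk (gd eta risk k) \<le> 1/3"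
    using eta by (simp add: field_simps)
  then show ?thesis
    using k by blast
qed

lemma stable_step:
  assumes "real n \<le> eta" "eta * risk w \<le> 1/3"
  shows "risk (w - eta *\<^sub>R grad risk w) \<le> risk w - (2/9) * eta * \<gamma>^2 * (risk w)^2"
proof -
  have eta: "0 < eta"
    using assms(1) n_pos by linarith
  have "eta * mean_weight w \<le> eta * risk w"
    using eta mean_weight_le_risk by (intro mult_left_mono) auto
  then have descent: "risk (w - eta *\<^sub>R grad risk w) \<le> risk w - eta / 2 * (norm (grad risk w))^2"
    using assms(2) eta by (intro risk_descent) linarith+
  have "real n * risk w \<le> 1/3"
    using mult_right_mono[OF assms(1) less_imp_le[OF risk_pos[of w]]] assms(2) by linarith
  then have "real n * (risk w)^2 \<le> (1/3) * risk w"
    using risk_pos[of w] by (simp add: power2_eq_square mult_right_mono mult.assoc[symmetric])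
  then have "(2/3) * risk w \<le> mean_weight w"
    using risk_sub_square_le_mean_weight[of w] by linarith
  then have "\<gamma> * ((2/3) * risk w) \<le> \<gamma> * mean_weight w"
    using gamma_pos by (intro mult_left_mono) auto
  also have "\<dots> \<le> norm (grad risk w)"
    by (rule norm_grad_risk_ge)
  finally have "(\<gamma> * ((2/3) * risk w))^2 \<le> (norm (grad risk w))^2"
    using gamma_pos risk_pos[of w] by (intro power_mono) auto
  then have "eta / 2 * (\<gamma> * ((2/3) * risk w))^2 \<le> eta / 2 * (norm (grad risk w))^2"
    using eta by (intro mult_left_mono) auto
  moreover have "eta / 2 * (\<gamma> * ((2/3) * risk w))^2 = (2/9) * eta * \<gamma>^2 * (risk w)^2"
    by (simp add: power2_eq_square)
  ultimately show ?thesis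
    using descent by linarith
qed

lemma stable_phase:
  assumes "real n \<le> eta" "eta * risk (gd eta risk s) \<le> 1/3"
  shows "eta * risk (gd eta risk (s + m)) \<le> 1/3 \<and>
         1 / risk (gd eta risk s) + (2/9) * eta * \<gamma>^2 * real m \<le> 1 / risk (gd eta risk (s + m))"
proof (induction m)
  case 0
  then show ?case using assms by simp
next
  case (Suc m)
  define v where "v = gd eta risk (s + m)"
  define c where "c = (2/9) * eta * \<gamma>^2"
  have c: "0 \<le> c"
    using assms(1) unfolding c_def by simp
  have IH: "eta * risk v \<le> 1/3" "1 / risk (gd eta risk s) + c * real m \<le> 1 / risk v"
    using Suc.IH unfolding v_def c_def by auto
  have step: "risk (v - eta *\<^sub>R grad risk v) \<le> risk v - c * (risk v)^2"
    unfolding c_def using assms(1) IH(1) by (rule stable_step)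
  have "risk (v - eta *\<^sub>R grad risk v) \<le> risk v"
    using step c by (smt (verit) mult_nonneg_nonneg zero_le_power2)
  then have "eta * risk (v - eta *\<^sub>R grad risk v) \<le> 1/3"
    using IH(1) mult_left_mono[of _ _ eta] assms(1) n_pos by (smt (verit) of_nat_0_le_iff)
  moreover have "1 / risk v + c \<le> 1 / risk (v - eta *\<^sub>R grad risk v)"
    using risk_pos risk_pos c step by (rule inverse_increment_le)
  then have "1 / risk (gd eta risk s) + c * real (Suc m) \<le> 1 / risk (v - eta *\<^sub>R grad risk v)"
    using IH(2) by (simp add: algebra_simps)
  ultimately show ?case
    unfolding c_def by (simp add: v_def)
qed

lemma risk_gd_le:
  assumes "exp 1 \<le> eta" "real n \<le> eta" "eta = \<gamma>^2 * real T / 120"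
  shows "risk (gd eta risk T) \<le> 9 / (eta * \<gamma>^2 * real T)"
proof -
  define t where "t = T div 2"
  have T: "2 * real t \<le> real T" "real T \<le> 2 * real t + 1"
    unfolding t_def by linarith+
  have g: "0 < \<gamma>^2" "\<gamma>^2 \<le> 1"
    using gamma_pos gamma_le_one by (auto simp: power_le_one)
  have "\<gamma>^2 * (2 * real t) \<le> \<gamma>^2 * real T" "\<gamma>^2 * real T \<le> \<gamma>^2 * (2 * real t + 1)"
    using T g by (intro mult_left_mono; simp)+
  then have "60 * eta - 1/2 \<le> \<gamma>^2 * real t" "\<gamma>^2 * real t \<le> 60 * eta"
    using g assms(3) unfolding distrib_left by linarith+
  then obtain k where k: "k < t" and stable: "eta * risk (gd eta risk k) \<le> 1/3"
    using exists_stable_iterate assms(1,2) by blast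
  have eta: "0 < eta"
    using assms(2) n_pos by linarith
  have "1 / risk (gd eta risk k) + (2/9) * eta * \<gamma>^2 * real (T - k)
              \<le> 1 / risk (gd eta risk T)"
    using stable_phase[OF assms(2) stable, of "T - k"] k by (simp add: t_def)
  then have growth: "(2/9) * eta * \<gamma>^2 * real (T - k) \<le> 1 / risk (gd eta risk T)"
    using risk_pos[of "gd eta risk k"] by (smt (verit) divide_pos_pos)
  have "(2/9) * eta * \<gamma>^2 * (real T / 2) \<le> (2/9) * eta * \<gamma>^2 * real (T - k)"
    using k T eta g by (intro mult_left_mono) (auto simp: of_nat_diff)
  also note growth
  finally have "(2/9) * eta * \<gamma>^2 * (real T / 2) \<le> 1 / risk (gd eta risk T)" .
  moreover have "0 < eta * \<gamma>^2 * real T"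
    using eta g k T by simp
  ultimately show ?thesis
    using risk_pos[of "gd eta risk T"] by (simp add: field_simps)
qed

end

lemma Max_step_size_terms_eq:
  fixes eta :: real
  assumes "exp 1 \<le> eta" "real n \<le> eta"
  shows "Max {eta, real n, exp 1, (eta + real n) / eta * ln ((eta + real n) / eta)} = eta"
proof -
  define r where "r = (eta + real n) / eta"
  have eta: "2.5 \<le> eta"
    using exp_lower_Taylor_quadratic[of "1::real"] assms(1) by simp
  have r: "1 \<le> r" "r \<le> 2"
    using eta assms(2) by (auto simp: r_def field_simps)
  have "ln r \<le> 1"
    using ln_le_minus_one[of r] r by simp
  then have "r * ln r \<le> 2 * 1"
    using r ln_ge_zero[OF r(1)] by (intro mult_mono) auto
  then show ?thesis
    using assms eta by (intro Max_eqI) (auto simp: r_def[symmetric])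
qed

lemma inverse_square_le_log_rate:
  fixes s :: real
  assumes "3 \<le> s"
  shows "1080 / s^2 \<le> 480 * (ln (s^2))^2 / s^2"
proof -
  have "exp (2::real) = (exp 1)^2"
    by (simp add: exp_of_nat_mult[symmetric])
  also have "\<dots> \<le> 3^2"
    using exp_le by (intro power_mono) auto
  also have "\<dots> \<le> s^2"
    using assms by (intro power_mono) auto
  finally have "exp 2 \<le> s^2" .
  then have "2 \<le> ln (s^2)"
    using assms by (simp add: ln_ge_iff)
  then have "1080 \<le> 480 * (ln (s^2))^2"
    using power_mono[of 2 "ln (s^2)" 2] by simp
  then show ?thesis
    using assms by (intro divide_right_mono) auto
qed

theorem mainTheorem2:
  fixes n :: nat and x :: "nat \<Rightarrow> 'a::euclidean_space" and y :: "nat \<Rightarrow> real"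
    and \<gamma> :: real and wstar :: 'a and T :: nat and \<eta> \<tau> :: real
  assumes n_pos: "n \<ge> 1"
    and x_bound: "\<forall>i<n. norm (x i) \<le> 1"
    and y_sign: "\<forall>i<n. y i \<in> {-1, 1}"
    and gamma_pos: "\<gamma> > 0"
    and wstar_unit: "norm wstar = 1"
    and margin: "\<forall>i<n. y i * (x i \<bullet> wstar) \<ge> \<gamma>"
    and T_large: "real T \<ge> 120 * max (exp 1) (real n) / \<gamma>^2"
    and eta_def: "\<eta> = \<gamma>^2 * real T / 120"
    and tau_def: "\<tau> = 60 / \<gamma>^2 * Max {\<eta>, real n, exp 1,
                    (\<eta> + real n) / \<eta> * ln ((\<eta> + real n) / \<eta>)}"
  shows "\<tau> \<le> real T / 2 \<and>
         logloss n x y (gd \<eta> (logloss n x y) T)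
           \<le> 480 * (ln (\<gamma>^4 * (real T)^2))^2 / (\<gamma>^4 * (real T)^2)"
proof -
  interpret separable_logistic_data n "\<lambda>i. y i *\<^sub>R x i" \<gamma> wstar
    using assms by unfold_locales auto
  have loss: "logloss n x y = risk"
    by (simp add: fun_eq_iff logloss_def risk_def logistic_loss_def)
  have eta: "exp 1 \<le> \<eta>" "real n \<le> \<eta>"
    using T_large gamma_pos by (auto simp: eta_def field_simps)
  have "\<tau> = 60 / \<gamma>^2 * \<eta>"
    unfolding tau_def Max_step_size_terms_eq[OF eta] ..
  then have "\<tau> = real T / 2"
    using gamma_pos by (simp add: eta_def)
  have "3 \<le> \<gamma>^2 * real T"
    using eta exp_lower_Taylor_quadratic[of "1::real"] by (simp add: eta_def)
  have "\<gamma>^4 * (real T)^2 = (\<gamma>^2 * real T)^2"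
    by (simp add: power_mult_distrib flip: power_mult)
  have "risk (gd \<eta> risk T) \<le> 9 / (\<eta> * \<gamma>^2 * real T)"
    using eta eta_def by (rule risk_gd_le)
  also have "\<dots> = 1080 / (\<gamma>^2 * real T)^2"
    by (simp add: eta_def power2_eq_square)
  also have "\<dots> \<le> 480 * (ln ((\<gamma>^2 * real T)^2))^2 / (\<gamma>^2 * real T)^2"
    using \<open>3 \<le> \<gamma>^2 * real T\<close> by (rule inverse_square_le_log_rate)
  finally show ?thesis
    unfolding loss \<open>\<gamma>^4 * (real T)^2 = (\<gamma>^2 * real T)^2\<close> using \<open>\<tau> = real T / 2\<close> by simp
qed

end
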